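(* For any $\alpha\ge1$ and $\beta\ge1$, there exist a finite set $\mathcal{N}$ of $n$ agents, a finite set $\mathcal{M}$ of feasible centers, a positive integer $k$, a pseudometric $d^m$ on $\mathcal{N}$ and a function $d^c:\mathcal{N}\times\mathcal{M}\to\mathbb{R}_{\ge0}$ (a centroid metric, possibly unrelated to $d^m$) such that no clustering is both $\alpha$-FJR with respect to the centroid loss $\ell_i(C,x)=d^c(i,x)$ and $\beta$-FJR with respect to the non-centroid loss $\ell_i(C,x)=\max_{j\in C}d^m(i,j)$.
   Context: Given losses $\ell_i(C,x)\ge0$ for $i\in C\subseteq\mathcal{N}$, $x\in\mathcal{M}$: a clustering is $\mathcal{X}=\{(C_1,x_1),\dots,(C_k,x_k)\}$ with $C_t$ pairwise disjoint subsets of $\mathcal{N}$ (some possibly empty), union $\mathcal{N}$, $x_t\in\mathcal{M}$; $\ell_i(\mathcal{X})=\ell_i(C_t,x_t)$ where $i\in C_t$. For $\alpha\ge1$, $\mathcal{X}$ is $\alpha$-FJR (with respect to the losses $\ell_i$) if there is no $S\subseteq\mathcal{N}$ with $|S|\ge n/k$ and $y\in\mathcal{M}$ with $\alpha\,\ell_i(S,y)<\min_{j\in S}\ell_j(\mathcal{X})$ for all $i\in S$. *)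

theory Defs
  imports Main "HOL.Real"
begin

text \<open>A clustering with k (possibly empty) clusters is represented by two
  functions: C t is the t-th cluster and x t its center, for t < k.\<close>

definition is_clustering ::
  "'a set \<Rightarrow> 'b set \<Rightarrow> nat \<Rightarrow> (nat \<Rightarrow> 'a set) \<Rightarrow> (nat \<Rightarrow> 'b) \<Rightarrow> bool" where
  "is_clustering N M k C x \<longleftrightarrow>
     (\<forall>t<k. C t \<subseteq> N \<and> x t \<in> M) \<and>
     (\<forall>s<k. \<forall>t<k. s \<noteq> t \<longrightarrow> C s \<inter> C t = {}) \<and>
     (\<Union>t<k. C t) = N"

definition clust_loss ::
  "('a \<Rightarrow> 'a set \<Rightarrow> 'b \<Rightarrow> real) \<Rightarrow> nat \<Rightarrow> (nat \<Rightarrow> 'a set) \<Rightarrow> (nat \<Rightarrow> 'b) \<Rightarrow> 'a \<Rightarrow> real" where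
  "clust_loss l k C x i = (let t = (THE t. t < k \<and> i \<in> C t) in l i (C t) (x t))"

definition is_FJR ::
  "'a set \<Rightarrow> 'b set \<Rightarrow> nat \<Rightarrow> ('a \<Rightarrow> 'a set \<Rightarrow> 'b \<Rightarrow> real) \<Rightarrow> real
     \<Rightarrow> (nat \<Rightarrow> 'a set) \<Rightarrow> (nat \<Rightarrow> 'b) \<Rightarrow> bool" where
  "is_FJR N M k l \<alpha> C x \<longleftrightarrow>
     \<not> (\<exists>S. S \<subseteq> N \<and> S \<noteq> {} \<and> real (card S) \<ge> real (card N) / real k \<and>
          (\<exists>y\<in>M. \<forall>i\<in>S. \<alpha> * l i S y < Min (clust_loss l k C x ` S)))"

definition pseudometric_on :: "'a set \<Rightarrow> ('a \<Rightarrow> 'a \<Rightarrow> real) \<Rightarrow> bool" where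
  "pseudometric_on N d \<longleftrightarrow>
     (\<forall>i\<in>N. d i i = 0) \<and>
     (\<forall>i\<in>N. \<forall>j\<in>N. d i j \<ge> 0 \<and> d i j = d j i) \<and>
     (\<forall>i\<in>N. \<forall>j\<in>N. \<forall>h\<in>N. d i h \<le> d i j + d j h)"

definition centroid_loss :: "('a \<Rightarrow> 'b \<Rightarrow> real) \<Rightarrow> 'a \<Rightarrow> 'a set \<Rightarrow> 'b \<Rightarrow> real" where
  "centroid_loss dc i C x = dc i x"

definition noncentroid_loss :: "('a \<Rightarrow> 'a \<Rightarrow> real) \<Rightarrow> 'a \<Rightarrow> 'a set \<Rightarrow> 'b \<Rightarrow> real" where
  "noncentroid_loss dm i C x = Max ((\<lambda>j. dm i j) ` C)"

end

theory Submission
  imports Defs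
begin

text \<open>Four agents form two groups, \<open>{0,1}\<close> and \<open>{2,3}\<close>, and \<open>k = 2\<close>, so every pair of agents
  is entitled to deviate. Under \<open>group_dist\<close> (distance 0 inside a group, 1 across) a group
  deviating on its own has loss 0, so \<open>\<beta>\<close>-FJR forces each group into a single cluster. Under
  \<open>center_dist\<close> each of the four centers serves (loss 0) exactly one agent of each group and
  leaves the other one at loss 1. Hence, whatever the two centers of the group clusters are,
  some agent of each group has loss 1, and these two agents are both served by a common
  center, which violates \<open>\<alpha>\<close>-FJR.\<close>

lemma clust_loss_in_cluster:
  assumes "is_clustering N M k C x" "t < k" "i \<in> C t"
  shows "clust_loss l k C x i = l i (C t) (x t)"
proof -
  have "(THE t. t < k \<and> i \<in> C t) = t"
  proof (rule the_equality)
    show "t < k \<and> i \<in> C t" using assms by auto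
  next
    fix s assume "s < k \<and> i \<in> C s"
    then show "s = t" using assms unfolding is_clustering_def by blast
  qed
  then show ?thesis unfolding clust_loss_def by simp
qed

lemma is_clustering_covers:
  assumes "is_clustering N M k C x" "i \<in> N"
  obtains t where "t < k" "i \<in> C t"
  using assms unfolding is_clustering_def by blast

lemma is_clustering_two_clusters_cover:
  assumes "is_clustering N M 2 C x" "s < 2" "t < 2" "s \<noteq> t"
  shows "C s \<union> C t = N"
proof -
  have "{..<2} = {s, t}" using assms(2-4) by (auto simp: less_2_cases_iff)
  then show ?thesis using assms(1) unfolding is_clustering_def by simp
qed

lemma FJR_zero_loss_coalition:
  assumes "is_FJR N M k l \<alpha> C x" "S \<subseteq> N" "finite S" "S \<noteq> {}"
    "real (card N) / real k \<le> real (card S)" "y \<in> M" "\<forall>i\<in>S. l i S y = 0"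
  shows "\<exists>i\<in>S. clust_loss l k C x i \<le> 0"
proof (rule ccontr)
  assume "\<not> (\<exists>i\<in>S. clust_loss l k C x i \<le> 0)"
  then have "0 < Min (clust_loss l k C x ` S)"
    using assms(3,4) by (simp add: Min_gr_iff not_le)
  then have "\<forall>i\<in>S. \<alpha> * l i S y < Min (clust_loss l k C x ` S)" using assms(7) by simp
  with assms(1-6) show False unfolding is_FJR_def by blast
qed

lemma noncentroid_loss_eq_0:
  assumes "S \<noteq> {}" "\<forall>j\<in>S. dm i j = 0"
  shows "noncentroid_loss dm i S y = 0"
proof -
  have "(\<lambda>j. dm i j) ` S = {0}" using assms by auto
  then show ?thesis unfolding noncentroid_loss_def by simp
qed

lemma noncentroid_clust_loss_nonpos_cluster:
  assumes "is_clustering N M k C x" "finite N" "t < k" "i \<in> C t" "j \<in> C t"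
    "clust_loss (noncentroid_loss dm) k C x i \<le> 0"
  shows "dm i j \<le> 0"
proof -
  have "C t \<subseteq> N" using assms(1,3) unfolding is_clustering_def by simp
  then have "finite (C t)" using assms(2) by (rule finite_subset)
  then have "dm i j \<le> noncentroid_loss dm i (C t) (x t)"
    unfolding noncentroid_loss_def using assms(5) by (simp add: Max_ge)
  also have "\<dots> \<le> 0" using assms(6) clust_loss_in_cluster[OF assms(1,3,4)] by simp
  finally show ?thesis .
qed

definition group_dist :: "nat \<Rightarrow> nat \<Rightarrow> real" where
  "group_dist i j = (if i div 2 = j div 2 then 0 else 1)"

definition center_dist :: "nat \<Rightarrow> nat \<Rightarrow> real" where
  "center_dist i y = (if i = y div 2 \<or> i = 2 + y mod 2 then 0 else 1)"

lemma pseudometric_on_group_dist: "pseudometric_on N group_dist"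
  unfolding pseudometric_on_def group_dist_def by simp

lemma FJR_group_dist_groups_clustered:
  assumes cl: "is_clustering {0..3} M 2 C x" and "M \<noteq> {}"
    and fjr: "is_FJR {0..3} M 2 (noncentroid_loss group_dist) \<beta> C x"
  obtains s t where "s < 2" "t < 2" "{0, 1} \<subseteq> C s" "{2, 3} \<subseteq> C t"
proof -
  have group_cluster: "\<exists>t<2. \<exists>i\<in>C t. i div 2 = g \<and> (\<forall>j\<in>C t. j div 2 = g)"
    if "g < 2" for g :: nat
  proof -
    let ?S = "{2 * g, 2 * g + 1}"
    obtain y where "y \<in> M" using \<open>M \<noteq> {}\<close> by blast
    moreover have "\<forall>i\<in>?S. noncentroid_loss group_dist i ?S y = 0"
      by (auto intro!: noncentroid_loss_eq_0 simp: group_dist_def)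
    moreover have "?S \<subseteq> {0..3}" "real (card {0..3::nat}) / real 2 \<le> real (card ?S)"
      using that by auto
    ultimately obtain i where i: "i \<in> ?S" "clust_loss (noncentroid_loss group_dist) 2 C x i \<le> 0"
      using FJR_zero_loss_coalition[OF fjr] by blast
    obtain t where t: "t < 2" "i \<in> C t"
      using is_clustering_covers[OF cl] i(1) \<open>?S \<subseteq> {0..3}\<close> by blast
    have "i div 2 = g" using i(1) by auto
    moreover have "j div 2 = i div 2" if "j \<in> C t" for j
      using noncentroid_clust_loss_nonpos_cluster[OF cl _ t that i(2)]
      by (simp add: group_dist_def split: if_splits)
    ultimately show ?thesis using t by metis
  qed
  obtain s a where s: "s < 2" "a \<in> C s" "a div 2 = 0" "\<forall>j\<in>C s. j div 2 = 0"
    using group_cluster[of 0] by auto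
  obtain t where t: "t < 2" "\<forall>j\<in>C t. j div 2 = 1"
    using group_cluster[of 1] by auto
  have "s \<noteq> t" using s(2,3) t(2) by auto
  then have "C s \<union> C t = {0..3}" using is_clustering_two_clusters_cover[OF cl s(1) t(1)] by simp
  then have cover: "j \<in> C s \<or> j \<in> C t" if "j \<le> 3" for j using that by auto
  have "j \<in> C s" if "j \<in> {0, 1}" for j
  proof -
    have "j div 2 \<noteq> 1" using that by auto
    then have "j \<notin> C t" using t(2) by blast
    then show ?thesis using cover[of j] that by auto
  qed
  moreover have "j \<in> C t" if "j \<in> {2, 3}" for j
  proof -
    have "j div 2 \<noteq> 0" using that by auto
    then have "j \<notin> C s" using s(4) by auto
    then show ?thesis using cover[of j] that by auto
  qed
  ultimately have "{0, 1} \<subseteq> C s" "{2, 3} \<subseteq> C t" by auto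
  with s(1) t(1) show thesis by (rule that)
qed

lemma no_clustering_FJR_center_dist_group_dist:
  assumes cl: "is_clustering {0..3} {0..3} 2 C x"
    and fjr_c: "is_FJR {0..3} {0..3} 2 (centroid_loss center_dist) \<alpha> C x"
    and fjr_m: "is_FJR {0..3} {0..3} 2 (noncentroid_loss group_dist) \<beta> C x"
  shows False
proof -
  obtain s t where st: "s < 2" "t < 2" "{0, 1} \<subseteq> C s" "{2, 3} \<subseteq> C t"
    using FJR_group_dist_groups_clustered[OF cl _ fjr_m] by auto
  have loss: "clust_loss (centroid_loss center_dist) 2 C x i = center_dist i (x u)"
    if "u < 2" "i \<in> C u" for i u
    using clust_loss_in_cluster[OF cl that] unfolding centroid_loss_def .
  have "x s \<in> {0..3}" "x t \<in> {0..3}" using cl st(1,2) unfolding is_clustering_def by auto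
  define p where "p = 1 - x s div 2"
  define q where "q = 3 - x t mod 2"
  have "x s div 2 = 0 \<or> x s div 2 = 1" using \<open>x s \<in> {0..3}\<close> by auto
  then have "p \<in> {0, 1}" "p \<noteq> x s div 2" unfolding p_def by auto
  then have p: "p \<in> {0, 1}" "center_dist p (x s) = 1"
    unfolding center_dist_def by auto
  have "x t mod 2 = 0 \<or> x t mod 2 = 1" by auto
  then have q: "q \<in> {2, 3}" "center_dist q (x t) = 1"
    unfolding q_def center_dist_def using \<open>x t \<in> {0..3}\<close> by auto
  define w where "w = 2 * p + (q - 2)"
  have "w \<in> {0..3}" "\<forall>i\<in>{p, q}. centroid_loss center_dist i {p, q} w = 0"
    using p(1) q(1) unfolding w_def centroid_loss_def center_dist_def by auto
  moreover have "{p, q} \<subseteq> {0..3}" "real (card {0..3::nat}) / real 2 \<le> real (card {p, q})"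
    using p(1) q(1) by auto
  ultimately obtain i where "i \<in> {p, q}" "clust_loss (centroid_loss center_dist) 2 C x i \<le> 0"
    using FJR_zero_loss_coalition[OF fjr_c] by blast
  moreover have "clust_loss (centroid_loss center_dist) 2 C x p = 1"
    using loss[OF st(1)] p st(3) by auto
  moreover have "clust_loss (centroid_loss center_dist) 2 C x q = 1"
    using loss[OF st(2)] q st(4) by auto
  ultimately show False by auto
qed

theorem mainTheorem13:
  fixes \<alpha> \<beta> :: real
  assumes "\<alpha> \<ge> 1" and "\<beta> \<ge> 1"
  shows "\<exists>(N :: nat set) (M :: nat set) (k :: nat) (dm :: nat \<Rightarrow> nat \<Rightarrow> real)
            (dc :: nat \<Rightarrow> nat \<Rightarrow> real).
           finite N \<and> N \<noteq> {} \<and> finite M \<and> M \<noteq> {} \<and> k > 0 \<and>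
           pseudometric_on N dm \<and> (\<forall>i\<in>N. \<forall>y\<in>M. dc i y \<ge> 0) \<and>
           (\<forall>C x. is_clustering N M k C x \<longrightarrow>
              \<not> (is_FJR N M k (centroid_loss dc) \<alpha> C x \<and>
                 is_FJR N M k (noncentroid_loss dm) \<beta> C x))"
proof (intro exI conjI allI impI)
  show "pseudometric_on {0..3} group_dist" by (rule pseudometric_on_group_dist)
  show "\<forall>i\<in>{0..3}. \<forall>y\<in>{0..3}. 0 \<le> center_dist i y" by (simp add: center_dist_def)
  show "\<not> (is_FJR {0..3} {0..3} 2 (centroid_loss center_dist) \<alpha> C x \<and>
           is_FJR {0..3} {0..3} 2 (noncentroid_loss group_dist) \<beta> C x)"
    if "is_clustering {0..3} {0..3} 2 C x" for C x
    using no_clustering_FJR_center_dist_group_dist[OF that] by blast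
qed auto

end
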